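(* Let $K\ge1$ and $m$ be positive integers, and for $k=1,\dots,K$ fix $\sigma_k^2>0$, $\lambda_k\in[0,1)$ and $\theta_k>0$ with $\sum_k\theta_k=1$. For $\gamma>0$ set $\Omega_k=\frac{\gamma\theta_k\sigma_k^2(1-\lambda_k^2)}{m}$, and for $\boldsymbol\ell=(\ell_1,\dots,\ell_K)\in\mathbb N_0^K$ let $F_{\mathcal A_{\boldsymbol\ell}}$ denote the CDF of $\prod_{k=1}^K(1+R_{\boldsymbol\ell,k})$ where $R_{\boldsymbol\ell,1},\dots,R_{\boldsymbol\ell,K}$ are independent with $R_{\boldsymbol\ell,k}\sim\mathcal G(m+\ell_k,\Omega_k)$ (so $F_{\mathcal A_{\boldsymbol\ell}}$ depends on $\gamma$). Then for every fixed $x>1$ and every $\boldsymbol\ell\in\mathbb N_0^K$ with $\boldsymbol\ell\ne\mathbf 0$, $$\lim_{\gamma\to\infty}\frac{F_{\mathcal A_{\boldsymbol\ell}}(x)}{F_{\mathcal A_{\mathbf 0}}(x)}=0,$$ i.e. $F_{\mathcal A_{\boldsymbol\ell}}(x)/F_{\mathcal A_{\mathbf 0}}(x)=o(1)$ as $\gamma\to\infty$.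
   Context: $\mathcal G(a,b)$ denotes the Gamma distribution with shape $a$ and scale $b$ (density $x^{a-1}e^{-x/b}/(\Gamma(a)b^a)$, $x>0$). *)

theory Defs
  imports "HOL-Probability.Probability"
begin

definition gamma_density :: "real \<Rightarrow> real \<Rightarrow> real \<Rightarrow> real" where
  "gamma_density a b x =
     (if x > 0 then x powr (a - 1) * exp (- x / b) / (Gamma a * b powr a) else 0)"

text \<open>Joint law of independent R_0,...,R_{K-1} with R_k ~ Gamma(m + l k, Om k)
  (components indexed by {..<K}).\<close>
definition gamma_prod_law :: "nat \<Rightarrow> nat \<Rightarrow> (nat \<Rightarrow> real) \<Rightarrow> (nat \<Rightarrow> nat) \<Rightarrow> (nat \<Rightarrow> real) measure" where
  "gamma_prod_law K m Om l =
     PiM {..<K} (\<lambda>k. density lborel (\<lambda>r. ennreal (gamma_density (real (m + l k)) (Om k) r)))"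

definition cdf_A :: "nat \<Rightarrow> nat \<Rightarrow> (nat \<Rightarrow> real) \<Rightarrow> (nat \<Rightarrow> nat) \<Rightarrow> real \<Rightarrow> real" where
  "cdf_A K m Om l x =
     measure (gamma_prod_law K m Om l)
       {r \<in> space (gamma_prod_law K m Om l). (\<Prod>k<K. 1 + r k) \<le> x}"

end

theory Submission
  imports Defs
begin

text \<open>Write the scales as \<open>\<Omega>_k = \<gamma> c_k\<close>. A Gamma law of integer shape \<open>n\<close> and scale
  \<open>\<gamma> c\<close> gives mass at most \<open>(t / (\<gamma> c))^n / \<Gamma>(n)\<close> to \<open>[0, t]\<close>, and for \<open>\<gamma> \<ge> 1\<close> mass at
  least a constant times \<open>\<gamma>^-n\<close> to a fixed interval \<open>[s, t]\<close> with \<open>s > 0\<close>. Since the \<open>R_k\<close> are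
  almost surely nonnegative, the event \<open>\<Prod>_k (1 + R_k) \<le> x\<close> lies in the box \<open>[0, x - 1]^K\<close>, and
  it contains the box \<open>[d/2, d]^K\<close> when \<open>(1 + d)^K = x\<close>. Hence the numerator is
  \<open>O(\<gamma>^-(Km + |\<ell>|))\<close> while the denominator is at least a constant times \<open>\<gamma>^-Km\<close>, and
  \<open>|\<ell>| \<ge> 1\<close>.\<close>

abbreviation gamma_law :: "real \<Rightarrow> real \<Rightarrow> real measure" where
  "gamma_law a b \<equiv> density lborel (\<lambda>r. ennreal (gamma_density a b r))"

lemma gamma_density_borel [measurable]: "gamma_density a b \<in> borel_measurable borel"
  unfolding gamma_density_def by measurable

lemma gamma_density_nat_shape:
  assumes "n \<ge> 1" "b > 0" "r > 0"
  shows "gamma_density (real n) b r = r ^ (n - 1) * exp (- r / b) / (Gamma (real n) * b ^ n)"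
proof -
  have "real n - 1 = real (n - 1)" using assms by simp
  then have "r powr (real n - 1) = r ^ (n - 1)" using assms by (metis powr_realpow)
  moreover have "b powr real n = b ^ n" using assms by (simp add: powr_realpow)
  ultimately show ?thesis using assms unfolding gamma_density_def by simp
qed

lemma Gamma_nat_shape_pos: "n \<ge> 1 \<Longrightarrow> Gamma (real n) > 0"
  by (intro Gamma_real_pos) simp

lemma emeasure_gamma_law_atMost_le:
  assumes "n \<ge> 1" "b > 0" "t \<ge> 0"
  shows "emeasure (gamma_law (real n) b) {..t} \<le> ennreal (t ^ n / (Gamma (real n) * b ^ n))"
proof -
  define c where "c = t ^ (n - 1) / (Gamma (real n) * b ^ n)"
  have "emeasure (gamma_law (real n) b) {..t}
      = (\<integral>\<^sup>+ r. ennreal (gamma_density (real n) b r) * indicator {..t} r \<partial>lborel)"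
    by (rule emeasure_density) auto
  also have "\<dots> \<le> (\<integral>\<^sup>+ r. ennreal c * indicator {0..t} r \<partial>lborel)"
  proof (rule nn_integral_mono)
    fix r
    show "ennreal (gamma_density (real n) b r) * indicator {..t} r \<le> ennreal c * indicator {0..t} r"
    proof (cases "0 < r \<and> r \<le> t")
      case True
      then have "r ^ (n - 1) * exp (- r / b) \<le> t ^ (n - 1) * 1"
        using assms by (intro mult_mono power_mono) auto
      then have "gamma_density (real n) b r \<le> c"
        using True assms Gamma_nat_shape_pos[OF assms(1)]
        by (simp add: gamma_density_nat_shape c_def divide_right_mono)
      then show ?thesis using True by (auto simp: indicator_def intro!: ennreal_leI)
    qed (auto simp: indicator_def gamma_density_def)
  qed
  also have "\<dots> = ennreal (c * t)"
    using assms Gamma_nat_shape_pos[OF assms(1)]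
    by (simp add: nn_integral_cmult_indicator c_def flip: ennreal_mult)
  also have "c * t = t ^ n / (Gamma (real n) * b ^ n)"
    using assms by (cases n) (auto simp: c_def field_simps)
  finally show ?thesis .
qed

lemma emeasure_gamma_law_atLeastAtMost_ge:
  assumes "n \<ge> 1" "b > 0" "0 < s" "s \<le> t"
  shows "ennreal (s ^ (n - 1) * exp (- t / b) / (Gamma (real n) * b ^ n) * (t - s))
           \<le> emeasure (gamma_law (real n) b) {s..t}"
proof -
  define c where "c = s ^ (n - 1) * exp (- t / b) / (Gamma (real n) * b ^ n)"
  have c: "c \<ge> 0" using assms Gamma_nat_shape_pos[OF assms(1)] by (simp add: c_def)
  have "ennreal (c * (t - s)) = ennreal c * ennreal (t - s)"
    using assms c by (simp add: ennreal_mult)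
  also have "\<dots> = (\<integral>\<^sup>+ r. ennreal c * indicator {s..t} r \<partial>lborel)"
    using assms by (subst nn_integral_cmult_indicator) auto
  also have "\<dots> \<le> (\<integral>\<^sup>+ r. ennreal (gamma_density (real n) b r) * indicator {s..t} r \<partial>lborel)"
  proof (rule nn_integral_mono)
    fix r
    show "ennreal c * indicator {s..t} r \<le> ennreal (gamma_density (real n) b r) * indicator {s..t} r"
    proof (cases "s \<le> r \<and> r \<le> t")
      case True
      then have "s ^ (n - 1) * exp (- t / b) \<le> r ^ (n - 1) * exp (- r / b)"
        using assms by (intro mult_mono power_mono) (auto simp: divide_right_mono)
      then have "c \<le> gamma_density (real n) b r"
        using True assms Gamma_nat_shape_pos[OF assms(1)]
        by (simp add: gamma_density_nat_shape c_def divide_right_mono)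
      then show ?thesis using True by (auto simp: indicator_def intro!: ennreal_leI)
    qed (auto simp: indicator_def)
  qed
  also have "\<dots> = emeasure (gamma_law (real n) b) {s..t}"
    by (rule emeasure_density[symmetric]) auto
  finally show ?thesis unfolding c_def .
qed

lemma emeasure_gamma_law_negative: "emeasure (gamma_law a b) {..<0} = 0"
proof -
  have "emeasure (gamma_law a b) {..<0}
      = (\<integral>\<^sup>+ r. ennreal (gamma_density a b r) * indicator {..<0} r \<partial>lborel)"
    by (rule emeasure_density) auto
  also have "(\<lambda>r. ennreal (gamma_density a b r) * indicator {..<0} r) = (\<lambda>r. 0)"
    by (auto simp: fun_eq_iff indicator_def gamma_density_def)
  finally show ?thesis by simp
qed

lemma product_sigma_finite_gamma_law: "product_sigma_finite (\<lambda>k. gamma_law (a k) (b k))"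
  unfolding product_sigma_finite_def
  by (auto simp: sigma_finite_measure.sigma_finite_iff_density_finite'[OF sigma_finite_lborel])

lemma emeasure_gamma_prod_law_PiE:
  assumes "\<And>k. k < K \<Longrightarrow> A k \<in> sets borel"
  shows "emeasure (gamma_prod_law K m Om l) (Pi\<^sub>E {..<K} A) =
           (\<Prod>k<K. emeasure (gamma_law (real (m + l k)) (Om k)) (A k))"
  unfolding gamma_prod_law_def
  by (rule product_sigma_finite.emeasure_PiM[OF product_sigma_finite_gamma_law]) (use assms in auto)

lemma space_gamma_prod_law: "space (gamma_prod_law K m Om l) = Pi\<^sub>E {..<K} (\<lambda>_. UNIV)"
  unfolding gamma_prod_law_def by (simp add: space_PiM)

lemma sets_gamma_prod_law:
  "sets (gamma_prod_law K m Om l) = sets (PiM {..<K} (\<lambda>_. borel :: real measure))"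
  unfolding gamma_prod_law_def by (intro sets_PiM_cong) auto

lemma PiE_in_sets_gamma_prod_law:
  "(\<And>k. k < K \<Longrightarrow> A k \<in> sets borel) \<Longrightarrow> Pi\<^sub>E {..<K} A \<in> sets (gamma_prod_law K m Om l)"
  unfolding sets_gamma_prod_law by (rule sets_PiM_I_finite) auto

lemma AE_gamma_prod_law_nonneg: "AE r in gamma_prod_law K m Om l. \<forall>k\<in>{..<K}. 0 \<le> r k"
proof (rule eventually_ball_finite)
  show "\<forall>k\<in>{..<K}. AE r in gamma_prod_law K m Om l. 0 \<le> r k"
  proof
    fix k assume k: "k \<in> {..<K}"
    define N where "N = Pi\<^sub>E {..<K} (\<lambda>j. if j = k then {..<0} else (UNIV :: real set))"
    have "{r \<in> space (gamma_prod_law K m Om l). \<not> 0 \<le> r k} = N"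
      using k unfolding space_gamma_prod_law N_def by (auto simp: PiE_def Pi_def)
    moreover have "emeasure (gamma_prod_law K m Om l) N = 0"
      using k unfolding N_def
      by (subst emeasure_gamma_prod_law_PiE)
         (auto intro!: prod_zero bexI[of _ k] simp: emeasure_gamma_law_negative)
    moreover have "N \<in> sets (gamma_prod_law K m Om l)"
      unfolding N_def by (rule PiE_in_sets_gamma_prod_law) auto
    ultimately show "AE r in gamma_prod_law K m Om l. 0 \<le> r k"
      by (subst AE_iff_measurable) auto
  qed
qed simp

lemma cdf_A_event_sets:
  "{r \<in> space (gamma_prod_law K m Om l). (\<Prod>k<K. 1 + r k) \<le> x} \<in> sets (gamma_prod_law K m Om l)"
proof -
  have "(\<lambda>r. \<Prod>k<K. 1 + r k) \<in> borel_measurable (PiM {..<K} (\<lambda>_. borel :: real measure))"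
    by measurable
  then have "(\<lambda>r. \<Prod>k<K. 1 + r k) \<in> borel_measurable (gamma_prod_law K m Om l)"
    by (subst measurable_cong_sets[OF sets_gamma_prod_law refl])
  then show ?thesis by measurable
qed

lemma factor_le_prod_one_plus:
  fixes r :: "nat \<Rightarrow> real"
  assumes "\<forall>k\<in>{..<K}. 0 \<le> r k" "j < K"
  shows "1 + r j \<le> (\<Prod>k<K. 1 + r k)"
proof -
  have "(\<Prod>k<K. 1 + r k) = (1 + r j) * (\<Prod>k\<in>{..<K}-{j}. 1 + r k)"
    using assms by (simp add: prod.remove)
  moreover have "1 \<le> (\<Prod>k\<in>{..<K}-{j}. 1 + r k)"
    using assms by (intro prod_ge_1) auto
  ultimately show ?thesis
    using assms by (metis add_increasing2 lessThan_iff mult_le_cancel_left1 not_le zero_le_one)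
qed

lemma emeasure_cdf_A_event_le:
  assumes "\<forall>k<K. Om k > 0" "x \<ge> 1" "m \<ge> 1"
  shows "emeasure (gamma_prod_law K m Om l) {r \<in> space (gamma_prod_law K m Om l). (\<Prod>k<K. 1 + r k) \<le> x}
           \<le> ennreal (\<Prod>k<K. (x - 1) ^ (m + l k) / (Gamma (real (m + l k)) * Om k ^ (m + l k)))"
proof -
  let ?P = "gamma_prod_law K m Om l"
  let ?B = "Pi\<^sub>E {..<K} (\<lambda>_. {..x - 1})"
  have "emeasure ?P {r \<in> space ?P. (\<Prod>k<K. 1 + r k) \<le> x} \<le> emeasure ?P ?B"
  proof (rule emeasure_mono_AE)
    show "AE r in ?P. r \<in> {r \<in> space ?P. (\<Prod>k<K. 1 + r k) \<le> x} \<longrightarrow> r \<in> ?B"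
      using AE_gamma_prod_law_nonneg[of K m Om l]
    proof eventually_elim
      case (elim r)
      show ?case
      proof
        assume r: "r \<in> {r \<in> space ?P. (\<Prod>k<K. 1 + r k) \<le> x}"
        have "r j \<le> x - 1" if "j < K" for j
          using factor_le_prod_one_plus[OF elim that] r by simp
        with r show "r \<in> ?B" unfolding space_gamma_prod_law by (auto simp: PiE_iff)
      qed
    qed
  qed (rule PiE_in_sets_gamma_prod_law, simp)
  also have "emeasure ?P ?B = (\<Prod>k<K. emeasure (gamma_law (real (m + l k)) (Om k)) {..x - 1})"
    by (rule emeasure_gamma_prod_law_PiE) auto
  also have "\<dots> \<le> (\<Prod>k<K. ennreal ((x - 1) ^ (m + l k) / (Gamma (real (m + l k)) * Om k ^ (m + l k))))"
    using assms by (intro prod_mono_ennreal emeasure_gamma_law_atMost_le) auto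
  also have "\<dots> = ennreal (\<Prod>k<K. (x - 1) ^ (m + l k) / (Gamma (real (m + l k)) * Om k ^ (m + l k)))"
    using assms by (intro prod_ennreal) (auto intro!: divide_nonneg_pos)
  finally show ?thesis .
qed

lemma cdf_A_le:
  assumes "\<forall>k<K. Om k > 0" "x \<ge> 1" "m \<ge> 1"
  shows "cdf_A K m Om l x \<le> (\<Prod>k<K. (x - 1) ^ (m + l k) / (Gamma (real (m + l k)) * Om k ^ (m + l k)))"
proof -
  let ?U = "\<Prod>k<K. (x - 1) ^ (m + l k) / (Gamma (real (m + l k)) * Om k ^ (m + l k))"
  have "?U \<ge> 0"
    using assms by (intro prod_nonneg) (auto intro!: divide_nonneg_pos)
  moreover have "cdf_A K m Om l x \<le> enn2real (ennreal ?U)"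
    unfolding cdf_A_def measure_def
    by (rule enn2real_mono[OF emeasure_cdf_A_event_le[OF assms]]) simp
  ultimately show ?thesis by simp
qed

lemma cdf_A_ge:
  assumes "\<forall>k<K. Om k > 0" "m \<ge> 1" "d > 0" "(1 + d) ^ K \<le> x"
  shows "(\<Prod>k<K. (d/2) ^ (m + l k) * exp (- d / Om k) / (Gamma (real (m + l k)) * Om k ^ (m + l k)))
           \<le> cdf_A K m Om l x"
proof -
  let ?P = "gamma_prod_law K m Om l"
  let ?E = "{r \<in> space ?P. (\<Prod>k<K. 1 + r k) \<le> x}"
  let ?B = "Pi\<^sub>E {..<K} (\<lambda>_. {d/2..d})"
  let ?c = "\<lambda>k. (d/2) ^ (m + l k) * exp (- d / Om k) / (Gamma (real (m + l k)) * Om k ^ (m + l k))"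
  have "1 \<le> (1 + d) ^ K" using \<open>d > 0\<close> by (intro one_le_power) simp
  then have "x \<ge> 1" using assms(4) by linarith
  have c: "?c k \<ge> 0" if "k < K" for k
    using assms that by (auto intro!: divide_nonneg_pos)
  have "?B \<subseteq> ?E"
  proof
    fix r assume r: "r \<in> ?B"
    have "(\<Prod>k<K. 1 + r k) \<le> (\<Prod>k<K. 1 + d)"
    proof (rule prod_mono)
      fix k assume "k \<in> {..<K}"
      then have "d/2 \<le> r k \<and> r k \<le> d" using r by (auto simp: PiE_iff)
      then show "0 \<le> 1 + r k \<and> 1 + r k \<le> 1 + d" using \<open>d > 0\<close> by linarith
    qed
    also have "\<dots> \<le> x" using assms by simp
    finally show "r \<in> ?E" using r unfolding space_gamma_prod_law by (auto simp: PiE_iff)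
  qed
  have "ennreal (\<Prod>k<K. ?c k) = (\<Prod>k<K. ennreal (?c k))"
    using c by (intro prod_ennreal[symmetric]) auto
  also have "\<dots> \<le> (\<Prod>k<K. emeasure (gamma_law (real (m + l k)) (Om k)) {d/2..d})"
  proof (intro prod_mono_ennreal)
    fix k assume "k \<in> {..<K}"
    then show "ennreal (?c k) \<le> emeasure (gamma_law (real (m + l k)) (Om k)) {d/2..d}"
      using emeasure_gamma_law_atLeastAtMost_ge[of "m + l k" "Om k" "d/2" d] assms
      by (cases "m + l k") (auto simp: field_simps)
  qed
  also have "\<dots> = emeasure ?P ?B"
    by (subst emeasure_gamma_prod_law_PiE) auto
  also have "\<dots> \<le> emeasure ?P ?E"
    using \<open>?B \<subseteq> ?E\<close> cdf_A_event_sets by (rule emeasure_mono)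
  finally have "ennreal (\<Prod>k<K. ?c k) \<le> emeasure ?P ?E" .
  moreover have "emeasure ?P ?E < top"
    using emeasure_cdf_A_event_le[OF assms(1) \<open>x \<ge> 1\<close> assms(2), of l] ennreal_less_top by (rule le_less_trans)
  ultimately have "enn2real (ennreal (\<Prod>k<K. ?c k)) \<le> cdf_A K m Om l x"
    unfolding cdf_A_def measure_def by (rule enn2real_mono)
  moreover have "(\<Prod>k<K. ?c k) \<ge> 0"
    using c by (intro prod_nonneg) simp
  ultimately show ?thesis by simp
qed

lemma prod_divide_scaled_powers:
  fixes g :: real and a b c :: "nat \<Rightarrow> real"
  shows "(\<Prod>k\<in>A. a k / (b k * (g * c k) ^ n k))
           = (\<Prod>k\<in>A. a k / (b k * c k ^ n k)) / g ^ (\<Sum>k\<in>A. n k)"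
proof -
  have "(\<Prod>k\<in>A. a k / (b k * (g * c k) ^ n k)) = (\<Prod>k\<in>A. a k / (b k * c k ^ n k) / g ^ n k)"
    by (intro prod.cong) (simp_all add: power_mult_distrib mult_ac)
  also have "\<dots> = (\<Prod>k\<in>A. a k / (b k * c k ^ n k)) / (\<Prod>k\<in>A. g ^ n k)"
    by (rule prod_dividef)
  finally show ?thesis by (simp add: power_sum)
qed

lemma cdf_A_scaled_le:
  assumes "\<forall>k<K. c k > 0" "x \<ge> 1" "m \<ge> 1" "g > 0"
  shows "cdf_A K m (\<lambda>k. g * c k) l x
           \<le> (\<Prod>k<K. (x - 1) ^ (m + l k) / (Gamma (real (m + l k)) * c k ^ (m + l k)))
               / g ^ (\<Sum>k<K. m + l k)"
  using cdf_A_le[of K "\<lambda>k. g * c k" x m l] assms by (simp add: prod_divide_scaled_powers)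

lemma cdf_A_scaled_ge:
  assumes "\<forall>k<K. c k > 0" "m \<ge> 1" "d > 0" "(1 + d) ^ K \<le> x" "g \<ge> 1"
  shows "(\<Prod>k<K. (d/2) ^ (m + l k) * exp (- d / c k) / (Gamma (real (m + l k)) * c k ^ (m + l k)))
           / g ^ (\<Sum>k<K. m + l k) \<le> cdf_A K m (\<lambda>k. g * c k) l x"
proof -
  have "(\<Prod>k<K. (d/2) ^ (m + l k) * exp (- d / c k) / (Gamma (real (m + l k)) * c k ^ (m + l k)))
          / g ^ (\<Sum>k<K. m + l k)
      = (\<Prod>k<K. (d/2) ^ (m + l k) * exp (- d / c k) / (Gamma (real (m + l k)) * (g * c k) ^ (m + l k)))"
    by (rule prod_divide_scaled_powers[symmetric])
  also have "\<dots> \<le> (\<Prod>k<K. (d/2) ^ (m + l k) * exp (- d / (g * c k))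
                            / (Gamma (real (m + l k)) * (g * c k) ^ (m + l k)))"
  proof (rule prod_mono)
    fix k assume "k \<in> {..<K}"
    then have ck: "c k > 0" using assms by auto
    have "d / (g * c k) \<le> d / c k"
      using ck \<open>d > 0\<close> \<open>g \<ge> 1\<close> by (intro divide_left_mono) auto
    then have "exp (- d / c k) \<le> exp (- d / (g * c k))" by simp
    then show "0 \<le> (d/2) ^ (m + l k) * exp (- d / c k) / (Gamma (real (m + l k)) * (g * c k) ^ (m + l k)) \<and>
               (d/2) ^ (m + l k) * exp (- d / c k) / (Gamma (real (m + l k)) * (g * c k) ^ (m + l k))
                 \<le> (d/2) ^ (m + l k) * exp (- d / (g * c k)) / (Gamma (real (m + l k)) * (g * c k) ^ (m + l k))"
      using ck \<open>d > 0\<close> \<open>g \<ge> 1\<close> Gamma_nat_shape_pos[of "m + l k"] \<open>m \<ge> 1\<close>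
      by (auto intro!: divide_right_mono mult_left_mono)
  qed
  also have "\<dots> \<le> cdf_A K m (\<lambda>k. g * c k) l x"
    using cdf_A_ge[of K "\<lambda>k. g * c k" m d x l] assms by simp
  finally show ?thesis .
qed

lemma cdf_A_ratio_tendsto_zero:
  assumes "\<forall>k<K. c k > 0" "x > 1" "m \<ge> 1" "K \<ge> 1" "\<exists>k<K. l k \<noteq> 0"
  shows "((\<lambda>g. cdf_A K m (\<lambda>k. g * c k) l x / cdf_A K m (\<lambda>k. g * c k) (\<lambda>_. 0) x) \<longlongrightarrow> 0) at_top"
proof -
  define d where "d = root K x - 1"
  define U where "U = (\<Prod>k<K. (x - 1) ^ (m + l k) / (Gamma (real (m + l k)) * c k ^ (m + l k)))"
  define D where "D = (\<Prod>k<K. (d/2) ^ m * exp (- d / c k) / (Gamma (real m) * c k ^ m))"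
  define L where "L = (\<Sum>k<K. l k)"
  have "d > 0" unfolding d_def using assms by simp
  have "(1 + d) ^ K = x" unfolding d_def using assms by (simp add: real_root_pow_pos)
  have "D > 0"
    unfolding D_def using assms \<open>d > 0\<close> Gamma_nat_shape_pos[of m] by (intro prod_pos) auto
  have "L \<ge> 1"
  proof -
    obtain j where "j < K" "l j \<noteq> 0" using assms(5) by auto
    moreover have "l j \<le> L" unfolding L_def using \<open>j < K\<close> by (intro member_le_sum) auto
    ultimately show ?thesis by simp
  qed
  have "U \<ge> 0"
    unfolding U_def using assms by (intro prod_nonneg) (auto intro!: divide_nonneg_pos)
  have ratio_le: "\<bar>cdf_A K m (\<lambda>k. g * c k) l x / cdf_A K m (\<lambda>k. g * c k) (\<lambda>_. 0) x\<bar> \<le> U / D * inverse g"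
    if "g \<ge> 1" for g
  proof -
    have num: "cdf_A K m (\<lambda>k. g * c k) l x \<le> U / g ^ (K * m + L)"
      using cdf_A_scaled_le[of K c x m g l] assms that
      by (simp add: U_def L_def sum.distrib)
    have den: "D / g ^ (K * m) \<le> cdf_A K m (\<lambda>k. g * c k) (\<lambda>_. 0) x"
      using cdf_A_scaled_ge[of K c m d x g "\<lambda>_. 0"] assms \<open>d > 0\<close> \<open>(1 + d) ^ K = x\<close> that
      by (simp add: D_def)
    have "cdf_A K m (\<lambda>k. g * c k) l x / cdf_A K m (\<lambda>k. g * c k) (\<lambda>_. 0) x
            \<le> (U / g ^ (K * m + L)) / (D / g ^ (K * m))"
      using num den \<open>U \<ge> 0\<close> \<open>D > 0\<close> that by (intro frac_le) (auto simp: cdf_A_def)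
    also have "\<dots> = U / D / g ^ L"
      using \<open>D > 0\<close> that by (simp add: power_add field_simps)
    also have "\<dots> \<le> U / D / g ^ 1"
      using \<open>L \<ge> 1\<close> \<open>U \<ge> 0\<close> \<open>D > 0\<close> that by (intro divide_left_mono power_increasing) auto
    finally show ?thesis
      using den \<open>D > 0\<close> that by (simp add: cdf_A_def divide_inverse)
  qed
  have "\<forall>\<^sub>F g in at_top.
      norm (cdf_A K m (\<lambda>k. g * c k) l x / cdf_A K m (\<lambda>k. g * c k) (\<lambda>_. 0) x) \<le> U / D * inverse g"
    using eventually_ge_at_top[of "1::real"] by eventually_elim (unfold real_norm_def, rule ratio_le)
  moreover have "((\<lambda>g. U / D * inverse g) \<longlongrightarrow> 0) at_top"
    by (intro tendsto_mult_right_zero tendsto_inverse_0_at_top filterlim_ident)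
  ultimately show ?thesis by (rule Lim_null_comparison)
qed

theorem lemma2:
  fixes K m :: nat and sigma2 lam theta :: "nat \<Rightarrow> real" and l :: "nat \<Rightarrow> nat" and x :: real
  assumes "K \<ge> 1" and "m \<ge> 1"
    and "\<forall>k<K. sigma2 k > 0"
    and "\<forall>k<K. 0 \<le> lam k \<and> lam k < 1"
    and "\<forall>k<K. theta k > 0"
    and "(\<Sum>k<K. theta k) = 1"
    and "x > 1"
    and "\<exists>k<K. l k \<noteq> 0"
  shows "((\<lambda>\<gamma>::real.
            cdf_A K m (\<lambda>k. \<gamma> * theta k * sigma2 k * (1 - (lam k)\<^sup>2) / real m) l x /
            cdf_A K m (\<lambda>k. \<gamma> * theta k * sigma2 k * (1 - (lam k)\<^sup>2) / real m) (\<lambda>_. 0) x)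
          \<longlongrightarrow> 0) at_top"
proof -
  define c where "c k = theta k * sigma2 k * (1 - (lam k)\<^sup>2) / real m" for k
  have "c k > 0" if "k < K" for k
  proof -
    have "(lam k)\<^sup>2 < 1" using assms(4) that by (simp add: abs_square_less_1)
    then show ?thesis unfolding c_def using assms that by simp
  qed
  then have "((\<lambda>\<gamma>. cdf_A K m (\<lambda>k. \<gamma> * c k) l x / cdf_A K m (\<lambda>k. \<gamma> * c k) (\<lambda>_. 0) x) \<longlongrightarrow> 0) at_top"
    using assms by (intro cdf_A_ratio_tendsto_zero) auto
  moreover have "(\<lambda>k. \<gamma> * theta k * sigma2 k * (1 - (lam k)\<^sup>2) / real m) = (\<lambda>k. \<gamma> * c k)" for \<gamma>
    by (simp add: c_def fun_eq_iff)
  ultimately show ?thesis by simp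
qed

end
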